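(* Let $\mathcal{H}$ be a Hilbert space of functions $\mathcal{X}\to\mathcal{Y}$, and let $\mathcal{G}\subset\mathcal{F}\subseteq\mathcal{H}$ be function sets with $\mathcal{G}$ a proper subset of $\mathcal{F}$. For any interpretation algorithm $\mathcal{A}$ (with respect to $\mathcal{G}$), there exists $f\in\mathcal{F}$ such that, with respect to $f$, either $\mathcal{A}$ is not consistent, or $\mathcal{A}(f,x)$ is not efficient on $x$ for some $x\in\mathcal{X}$.
   Context: $\mathcal{X}$ is an input space, $\mathcal{Y}$ an output space, and $\mathcal{H}\subseteq\{\mathcal{X}\to\mathcal{Y}\}$ a Hilbert space of functions. $\mathcal{G}\subset\mathcal{H}$ is the set of "interpretable" functions and $\mathcal{F}\subset\mathcal{H}$ the set of models to be interpreted. An interpretation algorithm $\mathcal{A}$ takes $f\in\mathcal{H}$ and $x\in\mathcal{X}$ as inputs and outputs a function $\mathcal{A}(f,x)\in\mathcal{G}$. Given $f\in\mathcal{H}$, $\mathcal{A}$ is consistent with respect to $f$ if $\mathcal{A}(f,x)$ is the same function for every $x\in\mathcal{X}$. A model $g\in\mathcal{H}$ is efficient with respect to $f$ on $x\in\mathcal{X}$ if $g(x)=f(x)$. *)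

theory Defs
  imports "HOL-Analysis.Analysis"
begin

definition hilbert_fun_space ::
  "('x \<Rightarrow> 'y::real_vector) set \<Rightarrow> (('x \<Rightarrow> 'y) \<Rightarrow> ('x \<Rightarrow> 'y) \<Rightarrow> real) \<Rightarrow> bool" where
  "hilbert_fun_space H ip \<longleftrightarrow>
     ((\<lambda>_. 0) \<in> H) \<and>
     (\<forall>f\<in>H. \<forall>g\<in>H. (\<lambda>t. f t + g t) \<in> H) \<and>
     (\<forall>c::real. \<forall>f\<in>H. (\<lambda>t. c *\<^sub>R f t) \<in> H) \<and>
     (\<forall>f\<in>H. \<forall>g\<in>H. ip f g = ip g f) \<and>
     (\<forall>f\<in>H. \<forall>g\<in>H. \<forall>h\<in>H. ip (\<lambda>t. f t + g t) h = ip f h + ip g h) \<and>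
     (\<forall>c::real. \<forall>f\<in>H. \<forall>g\<in>H. ip (\<lambda>t. c *\<^sub>R f t) g = c * ip f g) \<and>
     (\<forall>f\<in>H. ip f f \<ge> 0) \<and>
     (\<forall>f\<in>H. ip f f = 0 \<longrightarrow> f = (\<lambda>_. 0)) \<and>
     (\<forall>s::nat \<Rightarrow> ('x \<Rightarrow> 'y). (\<forall>n. s n \<in> H) \<longrightarrow>
        (\<forall>e>0. \<exists>N. \<forall>m\<ge>N. \<forall>n\<ge>N. sqrt (ip (\<lambda>t. s m t - s n t) (\<lambda>t. s m t - s n t)) < e) \<longrightarrow>
        (\<exists>l\<in>H. \<forall>e>0. \<exists>N. \<forall>n\<ge>N. sqrt (ip (\<lambda>t. s n t - l t) (\<lambda>t. s n t - l t)) < e))"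

definition interpretation_algorithm ::
  "('x \<Rightarrow> 'y) set \<Rightarrow> ('x \<Rightarrow> 'y) set \<Rightarrow> (('x \<Rightarrow> 'y) \<Rightarrow> 'x \<Rightarrow> ('x \<Rightarrow> 'y)) \<Rightarrow> bool" where
  "interpretation_algorithm H G A \<longleftrightarrow> (\<forall>f\<in>H. \<forall>x. A f x \<in> G)"

definition consistent_wrt ::
  "(('x \<Rightarrow> 'y) \<Rightarrow> 'x \<Rightarrow> ('x \<Rightarrow> 'y)) \<Rightarrow> ('x \<Rightarrow> 'y) \<Rightarrow> bool" where
  "consistent_wrt A f \<longleftrightarrow> (\<forall>x x'. A f x = A f x')"

definition efficient_on :: "('x \<Rightarrow> 'y) \<Rightarrow> ('x \<Rightarrow> 'y) \<Rightarrow> 'x \<Rightarrow> bool" where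
  "efficient_on g f x \<longleftrightarrow> g x = f x"

end

theory Submission
  imports Defs
begin

text \<open>A consistent algorithm that is efficient everywhere on f reproduces f itself,
  so it can only do so when f is interpretable; any f in F but not in G is a witness.\<close>

lemma consistent_efficient_imp_eq:
  assumes "consistent_wrt A f" and "\<forall>y. efficient_on (A f y) f y"
  shows "A f x = f"
proof
  fix y
  have "A f x y = A f y y" using assms(1) unfolding consistent_wrt_def by metis
  also have "\<dots> = f y" using assms(2) unfolding efficient_on_def by blast
  finally show "A f x y = f y" .
qed

theorem theorem1:
  fixes H F G :: "('x \<Rightarrow> 'y::real_vector) set"
    and ip :: "('x \<Rightarrow> 'y) \<Rightarrow> ('x \<Rightarrow> 'y) \<Rightarrow> real"
    and A :: "('x \<Rightarrow> 'y) \<Rightarrow> 'x \<Rightarrow> ('x \<Rightarrow> 'y)"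
  assumes "hilbert_fun_space H ip"
    and "G \<subset> F" and "F \<subseteq> H"
    and "interpretation_algorithm H G A"
  shows "\<exists>f\<in>F. \<not> consistent_wrt A f \<or> (\<exists>x. \<not> efficient_on (A f x) f x)"
proof -
  obtain f where f: "f \<in> F" "f \<notin> G" using assms(2) by blast
  have "A f x \<in> G" for x
    using assms(3,4) f(1) unfolding interpretation_algorithm_def by blast
  with f(2) have "\<not> (consistent_wrt A f \<and> (\<forall>x. efficient_on (A f x) f x))"
    using consistent_efficient_imp_eq by metis
  with f(1) show ?thesis by blast
qed

end
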